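(* A family $\mathcal{X}$ of metric spaces belongs to $\mathfrak{C}_\alpha$ for some ordinal $\alpha$ if and only if it belongs to $\mathfrak{C}_\alpha$ for some countable ordinal $\alpha$; that is, $\bigcup_\alpha\mathfrak{C}_\alpha=\mathfrak{C}_{\omega_1}$.
   Context: A family $\mathcal{U}$ of metric subspaces of a metric space $(X,d)$ is $r$-disjoint if $d(x,y)>r$ whenever $x\in U$, $y\in U'$, $U\neq U'$ in $\mathcal{U}$. For families $\mathcal{X},\mathcal{Y}$ and $R\in\mathbb{R}^{\mathbb{N}}$, $\mathcal{X}\xrightarrow{R}\mathcal{Y}$ means: there is an integer $k$ such that for each $X\in\mathcal{X}$ there are subcollections $\mathcal{U}_1,\dots,\mathcal{U}_k\subseteq\mathcal{Y}$ of subspaces of $X$, each $\mathcal{U}_i$ being $R_i$-disjoint, with $\bigcup_i\mathcal{U}_i$ covering $X$. A family is bounded if the diameters of its members are uniformly bounded. $\mathfrak{C}_0$ is the class of bounded families; for an ordinal $\alpha>0$, $\mathfrak{C}_\alpha$ is the class of families $\mathcal{X}$ such that for every $R\in\mathbb{R}^{\mathbb{N}}$ there exist $\beta<\alpha$ and $\mathcal{Y}\in\mathfrak{C}_\beta$ with $\mathcal{X}\xrightarrow{R}\mathcal{Y}$. $\omega_1$ denotes the first uncountable ordinal. *)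

theory Defs
  imports "HOL-Analysis.Abstract_Metric_Spaces"
begin

text \<open>A metric space is represented as a pair (carrier, metric); a family of
metric spaces is a set of such pairs over an ambient type 'a.\<close>

type_synonym 'a mspace_rep = "'a set \<times> ('a \<Rightarrow> 'a \<Rightarrow> real)"
type_synonym 'a mfamily = "'a mspace_rep set"

definition metric_family :: "'a mfamily \<Rightarrow> bool" where
  "metric_family \<X> \<longleftrightarrow> (\<forall>X\<in>\<X>. Metric_space (fst X) (snd X))"

definition is_subspace :: "'a mspace_rep \<Rightarrow> 'a mspace_rep \<Rightarrow> bool" where
  "is_subspace Y X \<longleftrightarrow> fst Y \<subseteq> fst X \<and>
     (\<forall>x\<in>fst Y. \<forall>y\<in>fst Y. snd Y x y = snd X x y)"

text \<open>r-disjointness of a family of subspaces of a space with metric d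
  (distinct subspaces = distinct carriers)\<close>
definition r_disjoint :: "('a \<Rightarrow> 'a \<Rightarrow> real) \<Rightarrow> real \<Rightarrow> 'a mfamily \<Rightarrow> bool" where
  "r_disjoint d r \<U> \<longleftrightarrow> (\<forall>U\<in>\<U>. \<forall>U'\<in>\<U>. fst U \<noteq> fst U' \<longrightarrow>
      (\<forall>x\<in>fst U. \<forall>y\<in>fst U'. d x y > r))"

text \<open>X --R--> Y  (indices of R are 1..k; R 0 is unused)\<close>
definition arrow :: "(nat \<Rightarrow> real) \<Rightarrow> 'a mfamily \<Rightarrow> 'a mfamily \<Rightarrow> bool" where
  "arrow R \<X> \<Y> \<longleftrightarrow> (\<exists>k::nat. \<forall>X\<in>\<X>. \<exists>\<U>::nat \<Rightarrow> 'a mfamily.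
      (\<forall>i\<in>{1..k}. \<U> i \<subseteq> \<Y> \<and> (\<forall>Y\<in>\<U> i. is_subspace Y X) \<and> r_disjoint (snd X) (R i) (\<U> i))
      \<and> fst X \<subseteq> (\<Union>i\<in>{1..k}. \<Union>Y\<in>\<U> i. fst Y))"

definition bounded_family :: "'a mfamily \<Rightarrow> bool" where
  "bounded_family \<X> \<longleftrightarrow> (\<exists>B::real. \<forall>X\<in>\<X>. \<forall>x\<in>fst X. \<forall>y\<in>fst X. snd X x y \<le> B)"

definition C0 :: "'a mfamily set" where
  "C0 = {\<X>. metric_family \<X> \<and> bounded_family \<X>}"

text \<open>Ordinals are represented by well-orders r (ordinal = order type of r).
  For x in Field r, levels r x is the class C_beta where beta is the order type of
  the strict initial segment of r below x; defined by well-founded recursion.\<close>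
definition levels :: "'b rel \<Rightarrow> 'b \<Rightarrow> 'a mfamily set" where
  "levels r = wfrec (r - Id) (\<lambda>C x. if underS r x = {} then C0
      else {\<X>. metric_family \<X> \<and>
         (\<forall>R::nat \<Rightarrow> real. \<exists>y\<in>underS r x. \<exists>\<Y>. \<Y> \<in> C y \<and> arrow R \<X> \<Y>)})"

text \<open>ordclass r = C_alpha where alpha is the order type of the well-order r.\<close>
definition ordclass :: "'b rel \<Rightarrow> 'a mfamily set" where
  "ordclass r = (if Field r = {} then C0
      else {\<X>. metric_family \<X> \<and>
         (\<forall>R::nat \<Rightarrow> real. \<exists>y\<in>Field r. \<exists>\<Y>. \<Y> \<in> levels r y \<and> arrow R \<X> \<Y>)})"

definition omega1 :: "nat set rel" where
  "omega1 = cardSuc natLeq"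

end

theory Submission imports Defs "HOL-Library.Countable_Set_Type" begin

text \<open>Write \<open>C\<^sub><\<^sub>\<omega>\<^sub>1\<close> for the union of the classes \<open>C\<^sub>\<beta>\<close> with \<open>\<beta> < \<omega>\<^sub>1\<close>.
  This union is closed under the step defining the classes: given \<open>\<X>\<close> such that for every
  \<open>R\<close> some \<open>\<Y> \<in> C\<^sub><\<^sub>\<omega>\<^sub>1\<close> satisfies \<open>\<X> \<rightarrow>\<^sup>R \<Y>\<close>, it suffices to consider \<open>R\<close> with natural
  values, and of those only the finitely many values used by the arrow matter. There are
  countably many finite sequences of naturals, so countably many levels \<open>\<beta> < \<omega>\<^sub>1\<close> serve
  all \<open>R\<close>, and they have a common strict upper bound \<open>\<gamma> < \<omega>\<^sub>1\<close>; hence \<open>\<X> \<in> C\<^sub>\<gamma>\<close>.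
  By well-founded induction every class \<open>C\<^sub>\<alpha>\<close> lies in \<open>C\<^sub><\<^sub>\<omega>\<^sub>1\<close>. Finally \<open>C\<^sub>\<beta>\<close> for
  \<open>\<beta> < \<omega>\<^sub>1\<close> only depends on the countable initial segment below \<open>\<beta>\<close>, which can be
  transported to a well-order on the naturals.\<close>

lemma levels_unfold:
  assumes "Well_order r"
  shows "levels r x = (if underS r x = {} then C0 else {\<X>. metric_family \<X> \<and>
         (\<forall>R::nat \<Rightarrow> real. \<exists>y\<in>underS r x. \<exists>\<Y>. \<Y> \<in> levels r y \<and> arrow R \<X> \<Y>)})"
proof -
  have wf: "wf (r - Id)" using assms unfolding well_order_on_def by blast
  have cut: "cut (levels r) (r - Id) x y = levels r y" if "y \<in> underS r x" for y
    using that by (intro cut_apply) (auto simp: underS_def)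
  show ?thesis
    by (subst levels_def, subst wfrec[OF wf], fold levels_def) (simp add: cut cong: bex_cong)
qed

lemma metric_family_if_in_levels: "Well_order r \<Longrightarrow> \<X> \<in> levels r x \<Longrightarrow> metric_family \<X>"
  by (subst (asm) levels_unfold) (auto simp: C0_def split: if_splits)

lemma arrow_refl: "arrow R \<X> \<X>"
  unfolding arrow_def
  by (intro exI[of _ 1] ballI, rule_tac x = "\<lambda>_. {X}" for X in exI)
    (auto simp: is_subspace_def r_disjoint_def)

lemma ordclass_if_in_levels:
  "Well_order r \<Longrightarrow> x \<in> Field r \<Longrightarrow> \<X> \<in> levels r x \<Longrightarrow> \<X> \<in> ordclass r"
  unfolding ordclass_def using metric_family_if_in_levels arrow_refl by fastforce

subsection \<open>The first uncountable ordinal\<close>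

lemma Card_order_omega1: "Card_order omega1"
  unfolding omega1_def by (simp add: cardSuc_Card_order natLeq_Card_order)

lemma Well_order_omega1: "Well_order omega1"
  using Card_order_omega1 by (rule card_order_on_well_order_on)

unbundle cardinal_syntax

lemma countable_under_omega1:
  assumes "z \<in> Field omega1"
  shows "countable (under omega1 z)"
proof -
  have "|underS omega1 z| <o cardSuc natLeq"
    using card_of_underS[OF Card_order_omega1 assms] unfolding omega1_def .
  then have "|underS omega1 z| \<le>o natLeq"
    using cardSuc_ordLeq_ordLess[OF natLeq_Card_order card_of_Card_order] by blast
  then have "countable (underS omega1 z)" using countable_card_le_natLeq by blast
  moreover have "under omega1 z \<subseteq> insert z (underS omega1 z)"
    unfolding under_def underS_def by auto
  ultimately show ?thesis by (meson countable_insert countable_subset)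
qed

lemma uncountable_Field_omega1: "\<not> countable (Field omega1)"
proof
  assume "countable (Field omega1)"
  then have "|Field omega1| \<le>o natLeq" using countable_card_le_natLeq by blast
  then have "omega1 \<le>o natLeq"
    using card_of_Field_ordIso[OF Card_order_omega1] ordIso_iff_ordLeq ordLeq_transitive by blast
  moreover have "natLeq <o omega1"
    unfolding omega1_def using cardSuc_greater natLeq_Card_order by blast
  ultimately show False using not_ordLess_ordLeq by blast
qed

lemma countable_bounded_in_omega1:
  assumes "countable Z" "Z \<subseteq> Field omega1"
  obtains j where "j \<in> Field omega1" "Z \<subseteq> underS omega1 j"
proof -
  have "countable (\<Union>z\<in>Z. under omega1 z)" using assms countable_under_omega1 by blast
  then have "\<not> Field omega1 \<subseteq> (\<Union>z\<in>Z. under omega1 z)"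
    using uncountable_Field_omega1 countable_subset by blast
  then obtain j where j: "j \<in> Field omega1" "j \<notin> (\<Union>z\<in>Z. under omega1 z)" by blast
  have wo: "wo_rel omega1" using Well_order_omega1 by (simp add: wo_rel_def)
  have "z \<in> underS omega1 j" if "z \<in> Z" for z
  proof -
    have z: "(j, z) \<notin> omega1" "z \<in> Field omega1" using j that assms(2) by (auto simp: under_def)
    then have "(z, j) \<in> omega1" using j(1) wo_rel.TOTALS[OF wo] by blast
    moreover have "z \<noteq> j" using z wo_rel.REFL[OF wo] by (auto dest: refl_onD)
    ultimately show ?thesis by (simp add: underS_def)
  qed
  then show ?thesis using that j(1) by blast
qed

subsection \<open>Arrows with a fixed number of colours\<close>

definition decomposition ::
    "nat \<Rightarrow> (nat \<Rightarrow> real) \<Rightarrow> 'a mfamily \<Rightarrow> 'a mspace_rep \<Rightarrow> (nat \<Rightarrow> 'a mfamily) \<Rightarrow> bool" where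
  "decomposition k R \<Y> X \<U> \<longleftrightarrow>
      (\<forall>i\<in>{1..k}. \<U> i \<subseteq> \<Y> \<and> (\<forall>Y\<in>\<U> i. is_subspace Y X) \<and> r_disjoint (snd X) (R i) (\<U> i))
      \<and> fst X \<subseteq> (\<Union>i\<in>{1..k}. \<Union>Y\<in>\<U> i. fst Y)"

definition arrow_with :: "nat \<Rightarrow> (nat \<Rightarrow> real) \<Rightarrow> 'a mfamily \<Rightarrow> 'a mfamily \<Rightarrow> bool" where
  "arrow_with k R \<X> \<Y> \<longleftrightarrow> (\<forall>X\<in>\<X>. \<exists>\<U>. decomposition k R \<Y> X \<U>)"

lemma arrow_iff_arrow_with: "arrow R \<X> \<Y> \<longleftrightarrow> (\<exists>k. arrow_with k R \<X> \<Y>)"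
  unfolding arrow_def arrow_with_def decomposition_def by blast

lemma r_disjoint_antimono: "r_disjoint d r \<U> \<Longrightarrow> r' \<le> r \<Longrightarrow> r_disjoint d r' \<U>"
  unfolding r_disjoint_def by force

lemma decomposition_antimono:
  "decomposition k R \<Y> X \<U> \<Longrightarrow> (\<And>i. i \<in> {1..k} \<Longrightarrow> R' i \<le> R i) \<Longrightarrow>
    decomposition k R' \<Y> X \<U>"
  unfolding decomposition_def by (auto intro: r_disjoint_antimono)

lemma arrow_with_antimono:
  "arrow_with k R \<X> \<Y> \<Longrightarrow> (\<And>i. i \<in> {1..k} \<Longrightarrow> R' i \<le> R i) \<Longrightarrow>
    arrow_with k R' \<X> \<Y>"
  unfolding arrow_with_def by (meson decomposition_antimono)

text \<open>The list \<open>s\<close> encodes the radii \<open>R 1, \<dots>, R (length s)\<close>.\<close>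

definition radii_of_list :: "nat list \<Rightarrow> nat \<Rightarrow> real" where
  "radii_of_list s i = real (s ! (i - 1))"

lemma radii_of_list_map_upt:
  assumes "i \<in> {1..k}"
  shows "radii_of_list (map f [1..<k+1]) i = real (f i)"
proof -
  have "map f [1..<k+1] ! (i - 1) = f (1 + (i - 1))"
    using assms by (intro nth_map_upt) auto
  then show ?thesis using assms unfolding radii_of_list_def by (simp del: upt_Suc)
qed

subsection \<open>Classes below \<open>\<omega>\<^sub>1\<close>\<close>

definition below_omega1 :: "'a mfamily \<Rightarrow> bool" where
  "below_omega1 \<X> \<longleftrightarrow> (\<exists>y\<in>Field omega1. \<X> \<in> levels omega1 y)"

lemma below_omega1_step:
  assumes mf: "metric_family \<X>" and step: "\<forall>R. \<exists>\<Y>. below_omega1 \<Y> \<and> arrow R \<X> \<Y>"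
  shows "below_omega1 \<X>"
proof -
  define served where "served s y \<longleftrightarrow> y \<in> Field omega1 \<and>
      (\<exists>\<Y>\<in>levels omega1 y. arrow_with (length s) (radii_of_list s) \<X> \<Y>)" for s y
  define level where "level s = (SOME y. served s y)" for s
  have level: "served s (level s)" if "\<exists>y. served s y" for s
    unfolding level_def using that by (rule someI_ex)
  define Z where "Z = level ` {s. \<exists>y. served s y}"
  have "countable Z" unfolding Z_def by simp
  moreover have "Z \<subseteq> Field omega1" unfolding Z_def using level served_def by blast
  ultimately obtain j where j: "j \<in> Field omega1" "Z \<subseteq> underS omega1 j"
    by (rule countable_bounded_in_omega1)
  have witness: "\<exists>y\<in>underS omega1 j. \<exists>\<Y>. \<Y> \<in> levels omega1 y \<and> arrow R \<X> \<Y>" for R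
  proof -
    define f where "f n = nat \<lceil>R n\<rceil>" for n
    obtain \<Y> y k where \<Y>: "y \<in> Field omega1" "\<Y> \<in> levels omega1 y"
        "arrow_with k (\<lambda>n. real (f n)) \<X> \<Y>"
      using step unfolding below_omega1_def arrow_iff_arrow_with by blast
    define s where "s = map f [1..<k+1]"
    have radii: "radii_of_list s i = real (f i)" if "i \<in> {1..k}" for i
      unfolding s_def using that by (rule radii_of_list_map_upt)
    have length_s: "length s = k" unfolding s_def by (simp del: upt_Suc)
    have "arrow_with k (radii_of_list s) \<X> \<Y>"
      using \<Y>(3) by (rule arrow_with_antimono) (simp add: radii)
    then have "served s y" using \<Y> length_s served_def by blast
    then have "served s (level s)" "level s \<in> underS omega1 j"
      using level j(2) unfolding Z_def by blast+
    then obtain \<Y>' where \<Y>': "\<Y>' \<in> levels omega1 (level s)" "arrow_with k (radii_of_list s) \<X> \<Y>'"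
      using length_s served_def by blast
    have "R i \<le> radii_of_list s i" if "i \<in> {1..k}" for i
      unfolding radii[OF that] f_def by linarith
    with \<Y>'(2) have "arrow R \<X> \<Y>'"
      unfolding arrow_iff_arrow_with by (blast intro: arrow_with_antimono)
    with \<open>level s \<in> underS omega1 j\<close> \<Y>'(1) show ?thesis by blast
  qed
  then have "underS omega1 j \<noteq> {}" by blast
  then have "\<X> \<in> levels omega1 j"
    using witness mf by (subst levels_unfold[OF Well_order_omega1]) auto
  then show ?thesis using j(1) unfolding below_omega1_def by blast
qed

lemma below_omega1_if_C0:
  assumes "\<X> \<in> C0"
  shows "below_omega1 \<X>"
proof -
  have wf: "wf (omega1 - Id)" using Well_order_omega1 unfolding well_order_on_def by blast
  obtain y where y: "y \<in> Field omega1" "\<And>z. (z, y) \<in> omega1 - Id \<Longrightarrow> z \<notin> Field omega1"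
    using wf_eq_minimal[THEN iffD1, OF wf, rule_format, of _ "Field omega1"]
      uncountable_Field_omega1 by (metis countable_empty ex_in_conv)
  then have "underS omega1 y = {}" unfolding underS_def by (blast intro: FieldI1)
  then have "\<X> \<in> levels omega1 y" using assms by (subst levels_unfold[OF Well_order_omega1]) simp
  then show ?thesis using y(1) unfolding below_omega1_def by blast
qed

lemma below_omega1_if_in_levels:
  assumes wo: "Well_order r"
  shows "\<X> \<in> levels r x \<Longrightarrow> below_omega1 \<X>"
proof (induction x arbitrary: \<X> rule: wf_induct[of "r - Id"])
  case 1
  then show ?case using wo unfolding well_order_on_def by blast
next
  case (2 x)
  show ?case
  proof (cases "underS r x = {}")
    case True
    then show ?thesis using "2.prems" below_omega1_if_C0 by (subst (asm) levels_unfold[OF wo]) simp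
  next
    case False
    then have "metric_family \<X>" "\<forall>R. \<exists>y\<in>underS r x. \<exists>\<Y>. \<Y> \<in> levels r y \<and> arrow R \<X> \<Y>"
      using "2.prems" by (subst (asm) levels_unfold[OF wo], simp)+
    moreover have "(y, x) \<in> r - Id" if "y \<in> underS r x" for y
      using that by (auto simp: underS_def)
    ultimately show ?thesis using "2.IH" by (metis below_omega1_step)
  qed
qed

lemma below_omega1_if_in_ordclass:
  assumes wo: "Well_order r" and "\<X> \<in> ordclass r"
  shows "below_omega1 \<X>"
proof (cases "Field r = {}")
  case True
  then show ?thesis using assms below_omega1_if_C0 unfolding ordclass_def by simp
next
  case False
  then have "metric_family \<X>" "\<forall>R. \<exists>y\<in>Field r. \<exists>\<Y>. \<Y> \<in> levels r y \<and> arrow R \<X> \<Y>"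
    using assms unfolding ordclass_def by simp_all
  then show ?thesis using below_omega1_if_in_levels[OF wo] by (metis below_omega1_step)
qed

lemma levels_dir_image:
  assumes wo: "Well_order r" and down: "\<And>a b. a \<in> A \<Longrightarrow> (b, a) \<in> r \<Longrightarrow> b \<in> A"
    and inj: "inj_on g A" and wo': "Well_order (dir_image (Restr r A) g)"
  shows "x \<in> A \<Longrightarrow> (levels (dir_image (Restr r A) g) (g x) :: 'a mfamily set) = levels r x"
proof (induction x rule: wf_induct[of "r - Id"])
  case 1
  then show ?case using wo unfolding well_order_on_def by blast
next
  case (2 x)
  let ?r' = "dir_image (Restr r A) g"
  have underS_image: "underS ?r' (g x) = g ` underS r x"
  proof
    show "underS ?r' (g x) \<subseteq> g ` underS r x"
    proof
      fix b assume "b \<in> underS ?r' (g x)"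
      then obtain a c where ac: "b = g a" "g x = g c" "(a, c) \<in> r" "a \<in> A" "c \<in> A" "b \<noteq> g x"
        unfolding underS_def dir_image_def by auto
      then have "c = x" using inj "2.prems" by (metis inj_onD)
      then show "b \<in> g ` underS r x" using ac unfolding underS_def by auto
    qed
  next
    show "g ` underS r x \<subseteq> underS ?r' (g x)"
    proof
      fix b assume "b \<in> g ` underS r x"
      then obtain a where a: "b = g a" "(a, x) \<in> r" "a \<noteq> x" unfolding underS_def by auto
      then have "a \<in> A" using down "2.prems" by blast
      then have "g a \<noteq> g x" "(g a, g x) \<in> ?r'"
        using inj "2.prems" a unfolding dir_image_def by (auto dest: inj_onD)
      then show "b \<in> underS ?r' (g x)" using a unfolding underS_def by auto
    qed
  qed
  have "(levels ?r' (g y) :: 'a mfamily set) = levels r y" if "y \<in> underS r x" for y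
    using that down[OF "2.prems"] "2.IH" unfolding underS_def by auto
  then have "(\<exists>y\<in>underS ?r' (g x). \<exists>\<Y>. \<Y> \<in> levels ?r' y \<and> arrow R \<X> \<Y>) \<longleftrightarrow>
      (\<exists>y\<in>underS r x. \<exists>\<Y>. \<Y> \<in> levels r y \<and> arrow R \<X> \<Y>)" for R and \<X> :: "'a mfamily"
    unfolding underS_image by auto
  then show ?case
    by (subst levels_unfold[OF wo'], subst levels_unfold[OF wo]) (simp add: underS_image)
qed

lemma countable_ordclass_if_below_omega1:
  assumes "below_omega1 (\<X> :: 'a mfamily)"
  shows "\<exists>r::nat rel. Well_order r \<and> countable (Field r) \<and> \<X> \<in> ordclass r"
proof -
  obtain y where y: "y \<in> Field omega1" "\<X> \<in> levels omega1 y"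
    using assms unfolding below_omega1_def by blast
  define A where "A = under omega1 y"
  define r where "r = dir_image (Restr omega1 A) (to_nat_on A)"
  have inj: "inj_on (to_nat_on A) A"
    using countable_under_omega1[OF y(1)] unfolding A_def by (simp add: inj_on_to_nat_on)
  have "Well_order (Restr omega1 A)" using Well_order_omega1 by (rule Well_order_Restr)
  moreover have "inj_on (to_nat_on A) (Field (Restr omega1 A))"
    using inj Field_Restr_subset by (rule inj_on_subset)
  ultimately have wo: "Well_order r" unfolding r_def by (rule Well_order_dir_image)
  have wo_rel: "wo_rel omega1" using Well_order_omega1 by (simp add: wo_rel_def)
  have down: "b \<in> A" if "a \<in> A" "(b, a) \<in> omega1" for a b
    using that wo_rel.TRANS[OF wo_rel] unfolding A_def under_def by (blast dest: transD)
  have "(y, y) \<in> omega1" using wo_rel.REFL[OF wo_rel] y(1) by (rule refl_onD)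
  then have "y \<in> A" unfolding A_def under_def by blast
  then have "(to_nat_on A y, to_nat_on A y) \<in> r"
    using \<open>(y, y) \<in> omega1\<close> unfolding r_def dir_image_def by blast
  moreover have "(levels r (to_nat_on A y) :: 'a mfamily set) = levels omega1 y"
    using levels_dir_image[of omega1 A "to_nat_on A" y] Well_order_omega1 down inj wo \<open>y \<in> A\<close>
    unfolding r_def by blast
  ultimately have "\<X> \<in> ordclass r"
    using ordclass_if_in_levels[OF wo] y(2) by (metis FieldI1)
  then show ?thesis using wo by blast
qed

theorem theorem3p5:
  fixes \<X> :: "'a mfamily"
  shows "((\<exists>r::'b rel. Well_order r \<and> \<X> \<in> ordclass r) \<longrightarrow>
            (\<exists>r::nat rel. Well_order r \<and> countable (Field r) \<and> \<X> \<in> ordclass r)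
            \<and> \<X> \<in> ordclass omega1)
       \<and> (\<X> \<in> ordclass omega1 \<longrightarrow> (\<exists>r::nat set rel. Well_order r \<and> \<X> \<in> ordclass r))"
proof (intro conjI impI)
  assume "\<exists>r::'b rel. Well_order r \<and> \<X> \<in> ordclass r"
  then have below: "below_omega1 \<X>" using below_omega1_if_in_ordclass by blast
  then show "\<exists>r::nat rel. Well_order r \<and> countable (Field r) \<and> \<X> \<in> ordclass r"
    by (rule countable_ordclass_if_below_omega1)
  show "\<X> \<in> ordclass omega1"
    using below ordclass_if_in_levels[OF Well_order_omega1] unfolding below_omega1_def by blast
next
  assume "\<X> \<in> ordclass omega1"
  then show "\<exists>r::nat set rel. Well_order r \<and> \<X> \<in> ordclass r" using Well_order_omega1 by blast
qed

end
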